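(* Let $\tfrac12<H<1$ and, for $x,y\ge0$, $R(x,y)=\tfrac12(x^{2H}+y^{2H}-|x-y|^{2H})$. There is a constant $0<K<\infty$ such that for every $T>1$, \[\int_{[\frac1T,1]^4}(xyuv)^{-2H}R(x,y)\,R(u,v)\,|x-u|^{2H-2}|y-v|^{2H-2}\,dx\,dy\,du\,dv\le K\log T.\] *)

theory Defs
  imports "HOL-Analysis.Analysis"
begin

definition fbm_cov :: "real \<Rightarrow> real \<Rightarrow> real \<Rightarrow> real" where
  "fbm_cov H x y = (x powr (2*H) + y powr (2*H) - \<bar>x - y\<bar> powr (2*H)) / 2"

end

theory Submission
  imports Defs
begin

(*
  Write R = fbm_cov H and a = 2H - 2, c = -(1+H)/2, d = (1-3H)/2.  The integrand of the theorem
  (fbm_kernel below) is invariant under the coordinate permutations (x,y,u,v) -> (y,x,v,u) and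
  (x,y,u,v) -> (u,v,x,y); together they move any coordinate to the first place, so the integral
  over [1/T,1]^4 is at most four times the integral over the region where x is the largest
  coordinate.  The normalised covariance satisfies (st)^(-2H) R(s,t) <= 2 s^c t^d for s, t > 0,
  so on that region the integrand is dominated by the product
      4 x^c * y^d [0 <= y <= x] * u^c |x-u|^a [u >= 0] * v^d |y-v|^a [v >= 0].
  By Tonelli this splits into Beta-type integrals: int_0^oo u^c |x-u|^a du <= C x^(c+a+1), and
  likewise in v, after which the y-integral over [0,x] is elementary.  The exponents add up to
  x^(-1), and int_{1/T}^1 dx/x = ln T.
*)

lemma nn_integral_powr_0_to:
  fixes e x :: real
  assumes "e > -1" "x \<ge> 0"
  shows "(\<integral>\<^sup>+u\<in>{0..x}. ennreal (u powr e) \<partial>lborel) = ennreal (x powr (e+1) / (e+1))"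
  by (rule nn_integral_has_integral_lebesgue'[OF _ has_integral_powr_from_0[OF assms]]) simp

lemma nn_integral_powr_to_infinity:
  fixes e y :: real
  assumes "e < -1" "y > 0"
  shows "(\<integral>\<^sup>+v\<in>{y..}. ennreal (v powr e) \<partial>lborel) = ennreal (y powr (e+1) / -(e+1))"
proof -
  have "-(y powr (e+1)) / (e+1) = y powr (e+1) / -(e+1)" by (metis minus_divide_left minus_divide_right)
  then show ?thesis
    using nn_integral_has_integral_lebesgue'[OF _ has_integral_powr_to_inf[OF assms]] by simp
qed

lemma nn_integral_dist_powr_interval:
  fixes e x r :: real
  assumes "e > -1" "r \<ge> 0"
  shows "(\<integral>\<^sup>+u\<in>{x-r..x+r}. ennreal (\<bar>x - u\<bar> powr e) \<partial>lborel) \<le> ennreal (2 * (r powr (e+1) / (e+1)))"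
proof -
  have "(\<integral>\<^sup>+u. ennreal (\<bar>x - u\<bar> powr e) * indicator {x-r..x+r} u \<partial>lborel)
      = (\<integral>\<^sup>+w. ennreal (\<bar>w\<bar> powr e) * indicator {-r..r} w \<partial>lborel)"
    using nn_integral_real_affine[where c = 1 and t = x, of "\<lambda>u. ennreal (\<bar>x - u\<bar> powr e) * indicator {x-r..x+r} u"]
    by (auto intro!: nn_integral_cong split: split_indicator)
  also have "\<dots> \<le> (\<integral>\<^sup>+w. ennreal (\<bar>w\<bar> powr e) * indicator {-r..0} w + ennreal (w powr e) * indicator {0..r} w \<partial>lborel)"
    by (intro nn_integral_mono) (auto split: split_indicator)
  also have "\<dots> = (\<integral>\<^sup>+w. ennreal (\<bar>w\<bar> powr e) * indicator {-r..0} w \<partial>lborel) + ennreal (r powr (e+1) / (e+1))"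
    using assms by (simp add: nn_integral_add nn_integral_powr_0_to)
  also have "(\<integral>\<^sup>+w. ennreal (\<bar>w\<bar> powr e) * indicator {-r..0} w \<partial>lborel)
      = (\<integral>\<^sup>+w. ennreal (w powr e) * indicator {0..r} w \<partial>lborel)"
    using nn_integral_real_affine[where c = "-1" and t = 0, of "\<lambda>w. ennreal (\<bar>w\<bar> powr e) * indicator {-r..0} w"]
    by (auto intro!: nn_integral_cong split: split_indicator)
  also have "\<dots> = ennreal (r powr (e+1) / (e+1))"
    by (rule nn_integral_powr_0_to[OF assms])
  finally show ?thesis
    using assms by (simp add: ennreal_plus[symmetric] del: ennreal_plus)
qed

lemma nn_integral_inverse_interval:
  fixes K T :: real
  assumes "T > 1" "K \<ge> 0"
  shows "(\<integral>\<^sup>+x\<in>{1/T..1}. ennreal (K / x) \<partial>lborel) = ennreal (K * ln T)"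
proof -
  have pos: "0 < x" if "x \<in> {1/T..1}" for x
    using that assms by (auto intro: less_le_trans[of 0 "1/T"])
  have "((\<lambda>x. K / x) has_integral (K * ln 1 - K * ln (1/T))) {1/T..1}"
  proof (rule fundamental_theorem_of_calculus)
    show "1/T \<le> 1" using assms by simp
    show "((\<lambda>x. K * ln x) has_vector_derivative K / x) (at x within {1/T..1})" if "x \<in> {1/T..1}" for x
      using pos[OF that] unfolding has_real_derivative_iff_has_vector_derivative[symmetric]
      by (auto intro!: derivative_eq_intros simp: field_simps)
  qed
  then have "((\<lambda>x. K / x) has_integral (K * ln T)) {1/T..1}" using assms by (simp add: ln_div)
  then show ?thesis using pos assms(2) by (intro nn_integral_has_integral_lebesgue') (auto intro!: divide_nonneg_pos)
qed

lemma powr_le_of_half_le: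
  fixes e z w :: real
  assumes "e \<le> 0" "0 < w" "w/2 \<le> z"
  shows "z powr e \<le> 2 powr (-e) * w powr e"
proof -
  have "z powr e \<le> (w/2) powr e" using assms by (auto intro!: powr_mono2')
  also have "\<dots> = 2 powr (-e) * w powr e"
    using assms by (simp add: powr_divide powr_minus_divide)
  finally show ?thesis .
qed

(*
  Pointwise domination of the Beta kernel u^c |x - u|^a on [0, oo) by three integrable pieces:
  near 0 (where |x - u| >= x/2), near x (where u >= x/2) and near infinity (where |x - u| >= u/2).
*)

lemma beta_kernel_pointwise:
  fixes a c x u :: real
  assumes "c \<le> 0" "a \<le> 0" "0 < x" "0 \<le> u"
  shows "u powr c * \<bar>x - u\<bar> powr a
    \<le> 2 powr (-a) * x powr a * (u powr c * indicator {0..x} u)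
     + 2 powr (-c) * x powr c * (\<bar>x - u\<bar> powr a * indicator {0..2*x} u)
     + 2 powr (-a) * (u powr (c+a) * indicator {x..} u)"
    (is "_ \<le> ?near0 + ?nearx + ?far")
proof -
  have nonneg: "0 \<le> ?near0" "0 \<le> ?nearx" "0 \<le> ?far"
    by (simp_all add: indicator_def)
  consider "u \<le> x/2" | "x/2 \<le> u" "u \<le> 2*x" | "2*x \<le> u" by linarith
  then show ?thesis
  proof cases
    case 1
    have "\<bar>x - u\<bar> powr a \<le> 2 powr (-a) * x powr a"
      using 1 assms by (intro powr_le_of_half_le) auto
    then have "u powr c * \<bar>x - u\<bar> powr a \<le> ?near0"
      using 1 assms by (auto simp: mult_left_mono mult.commute mult.left_commute)
    with nonneg show ?thesis by linarith
  next
    case 2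
    have "u powr c \<le> 2 powr (-c) * x powr c"
      using 2 assms by (intro powr_le_of_half_le) auto
    then have "u powr c * \<bar>x - u\<bar> powr a \<le> ?nearx"
      using 2 assms by (auto simp: mult_right_mono)
    with nonneg show ?thesis by linarith
  next
    case 3
    have "\<bar>x - u\<bar> powr a \<le> 2 powr (-a) * u powr a"
      using 3 assms by (intro powr_le_of_half_le) auto
    then have "u powr c * \<bar>x - u\<bar> powr a \<le> u powr c * (2 powr (-a) * u powr a)"
      by (intro mult_left_mono) auto
    also have "\<dots> = ?far"
      using 3 assms by (simp add: powr_add)
    finally show ?thesis using nonneg by linarith
  qed
qed

lemma beta_kernel_pointwise_ennreal:
  fixes a c x u :: real
  assumes "c \<le> 0" "a \<le> 0" "0 < x"
  shows "ennreal (u powr c * \<bar>x - u\<bar> powr a) * indicator {0..} u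
    \<le> ennreal (2 powr (-a) * x powr a) * (ennreal (u powr c) * indicator {0..x} u)
     + ennreal (2 powr (-c) * x powr c) * (ennreal (\<bar>x - u\<bar> powr a) * indicator {0..2*x} u)
     + ennreal (2 powr (-a)) * (ennreal (u powr (c+a)) * indicator {x..} u)"
proof (cases "0 \<le> u")
  case True
  have "ennreal (u powr c * \<bar>x - u\<bar> powr a)
      \<le> ennreal (2 powr (-a) * x powr a * (u powr c * indicator {0..x} u)
        + 2 powr (-c) * x powr c * (\<bar>x - u\<bar> powr a * indicator {0..2*x} u)
        + 2 powr (-a) * (u powr (c+a) * indicator {x..} u))"
    using beta_kernel_pointwise[OF assms True] by (rule ennreal_leI)
  also have "\<dots> = ennreal (2 powr (-a) * x powr a) * (ennreal (u powr c) * indicator {0..x} u)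
      + ennreal (2 powr (-c) * x powr c) * (ennreal (\<bar>x - u\<bar> powr a) * indicator {0..2*x} u)
      + ennreal (2 powr (-a)) * (ennreal (u powr (c+a)) * indicator {x..} u)"
    by (simp add: ennreal_mult'' ennreal_indicator)
  finally show ?thesis using True by simp
qed simp

definition beta_const :: "real \<Rightarrow> real \<Rightarrow> real" where
  "beta_const c a = 2 powr (-a) / (c+1) + 2 * 2 powr (-c) / (a+1) + 2 powr (-a) / -(c+a+1)"

lemma beta_const_pos:
  assumes "-1 < c" "-1 < a" "c + a < -1"
  shows "0 < beta_const c a"
proof -
  have "0 < 2 powr (-a) / (c+1)" using assms by simp
  moreover have "0 \<le> 2 * 2 powr (-c) / (a+1)" "0 \<le> 2 powr (-a) / -(c+a+1)"
    using assms by auto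
  ultimately show ?thesis unfolding beta_const_def by linarith
qed

lemma nn_integral_beta_kernel:
  fixes a c x :: real
  assumes c: "-1 < c" "c \<le> 0" and a: "-1 < a" "a \<le> 0" and ca: "c + a < -1" and x: "0 < x"
  shows "(\<integral>\<^sup>+u\<in>{0..}. ennreal (u powr c * \<bar>x - u\<bar> powr a) \<partial>lborel)
    \<le> ennreal (beta_const c a * x powr (c+a+1))"
proof -
  define A where "A = 2 powr (-a) * x powr a"
  define B where "B = 2 powr (-c) * x powr c"
  define C where "C = 2 powr (-a)"
  define I0 where "I0 = x powr (c+1) / (c+1)"
  define I1 where "I1 = 2 * (x powr (a+1) / (a+1))"
  define I2 where "I2 = x powr (c+a+1) / -(c+a+1)"
  have ABC: "0 \<le> A" "0 \<le> B" "0 \<le> C" unfolding A_def B_def C_def by simp_all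
  have I012: "0 \<le> I0" "0 \<le> I1" "0 \<le> I2" unfolding I0_def I1_def I2_def using c a ca by auto
  have "(\<integral>\<^sup>+u\<in>{0..}. ennreal (u powr c * \<bar>x - u\<bar> powr a) \<partial>lborel)
    \<le> (\<integral>\<^sup>+u. ennreal A * (ennreal (u powr c) * indicator {0..x} u)
        + ennreal B * (ennreal (\<bar>x - u\<bar> powr a) * indicator {0..2*x} u)
        + ennreal C * (ennreal (u powr (c+a)) * indicator {x..} u) \<partial>lborel)"
    unfolding A_def B_def C_def using c a x by (intro nn_integral_mono beta_kernel_pointwise_ennreal) auto
  also have "\<dots> = ennreal A * (\<integral>\<^sup>+u\<in>{0..x}. ennreal (u powr c) \<partial>lborel)
        + ennreal B * (\<integral>\<^sup>+u\<in>{0..2*x}. ennreal (\<bar>x - u\<bar> powr a) \<partial>lborel)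
        + ennreal C * (\<integral>\<^sup>+u\<in>{x..}. ennreal (u powr (c+a)) \<partial>lborel)"
    by (simp add: nn_integral_add nn_integral_cmult)
  also have "\<dots> \<le> ennreal A * ennreal I0 + ennreal B * ennreal I1 + ennreal C * ennreal I2"
  proof -
    have "(\<integral>\<^sup>+u\<in>{0..2*x}. ennreal (\<bar>x - u\<bar> powr a) \<partial>lborel) \<le> ennreal I1"
      using nn_integral_dist_powr_interval[of a x x] a x by (simp add: I1_def mult_2[symmetric])
    then show ?thesis
      using c a ca x
      by (intro add_mono mult_left_mono order.refl)
         (simp_all add: I0_def I2_def nn_integral_powr_0_to nn_integral_powr_to_infinity)
  qed
  also have "\<dots> = ennreal (A * I0 + B * I1 + C * I2)"
    using ABC I012 by (simp add: ennreal_mult)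
  also have "A * I0 + B * I1 + C * I2 = beta_const c a * x powr (c+a+1)"
  proof -
    have "A * I0 = 2 powr (-a) / (c+1) * x powr (c+a+1)"
      using x by (simp add: A_def I0_def powr_add)
    moreover have "B * I1 = 2 * 2 powr (-c) / (a+1) * x powr (c+a+1)"
      using x by (simp add: B_def I1_def powr_add)
    moreover have "C * I2 = 2 powr (-a) / -(c+a+1) * x powr (c+a+1)"
      by (simp add: C_def I2_def)
    ultimately show ?thesis by (simp add: beta_const_def distrib_right)
  qed
  finally show ?thesis .
qed

lemma fbm_cov_sym: "fbm_cov H x y = fbm_cov H y x"
  unfolding fbm_cov_def by (simp add: abs_minus_commute add.commute)

lemma fbm_cov_nonneg:
  assumes "0 \<le> x" "0 \<le> y" "0 < H"
  shows "0 \<le> fbm_cov H x y"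
proof -
  have "\<bar>x - y\<bar> powr (2*H) \<le> max x y powr (2*H)"
    using assms by (intro powr_mono2) auto
  also have "\<dots> \<le> x powr (2*H) + y powr (2*H)"
    by (simp add: max_def)
  finally show ?thesis unfolding fbm_cov_def by simp
qed

lemma powr_increment_le:
  fixes s t p :: real
  assumes "0 < s" "s \<le> t" "1 \<le> p"
  shows "t powr p - (t - s) powr p \<le> p * s * t powr (p - 1)"
proof (cases "s = t")
  case True
  have "t powr p = t * t powr (p - 1)"
    using assms by (simp add: powr_diff)
  then show ?thesis
    using True assms by (simp add: mult_right_mono)
next
  case False
  then have lt: "t - s < t" "0 < t - s" using assms by auto
  have "\<And>z. t - s \<le> z \<Longrightarrow> z \<le> t \<Longrightarrow> ((\<lambda>z. z powr p) has_real_derivative p * z powr (p - 1)) (at z)"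
    using lt by (intro has_real_derivative_powr) auto
  then obtain z where z: "t - s < z" "z < t" "t powr p - (t - s) powr p = s * (p * z powr (p - 1))"
    using MVT2[OF lt(1)] by force
  have "z powr (p - 1) \<le> t powr (p - 1)"
    using z lt assms by (intro powr_mono2) auto
  then show ?thesis
    using z assms by (simp add: mult.assoc mult_left_mono)
qed

lemma fbm_cov_le:
  assumes "0 < s" "s \<le> t" "1/2 \<le> H" "H \<le> 1"
  shows "fbm_cov H s t \<le> 2 * s * t powr (2*H - 1)"
proof -
  have increment: "t powr (2*H) - (t - s) powr (2*H) \<le> 2 * s * t powr (2*H - 1)"
  proof -
    have "t powr (2*H) - (t - s) powr (2*H) \<le> (2*H) * s * t powr (2*H - 1)"
      using assms by (intro powr_increment_le) auto
    also have "\<dots> \<le> 2 * s * t powr (2*H - 1)"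
      using assms by (intro mult_right_mono) auto
    finally show ?thesis .
  qed
  have "s powr (2*H) = s * s powr (2*H - 1)"
    using assms by (simp add: powr_diff)
  also have "\<dots> \<le> s * t powr (2*H - 1)"
    using assms by (intro mult_left_mono powr_mono2) auto
  finally have "s powr (2*H) \<le> s * t powr (2*H - 1)" .
  moreover have "\<bar>s - t\<bar> = t - s" "0 \<le> s * t powr (2*H - 1)" using assms by simp_all
  ultimately show ?thesis
    using increment unfolding fbm_cov_def by (simp add: mult.assoc)
qed

lemma fbm_cov_weight_le_ordered:
  assumes "0 < s" "s \<le> t" "1/2 \<le> H" "H \<le> 1"
  shows "(s*t) powr (-2*H) * fbm_cov H s t \<le> 2 * s powr (1 - 2*H) * t powr (-1)"
proof -
  have "(s*t) powr (-2*H) * fbm_cov H s t \<le> (s*t) powr (-2*H) * (2 * s * t powr (2*H - 1))"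
    using assms by (intro mult_left_mono fbm_cov_le) auto
  also have "\<dots> = 2 * (s * s powr (-2*H)) * (t powr (-2*H) * t powr (2*H - 1))"
    using assms by (simp add: powr_mult ac_simps)
  also have "\<dots> = 2 * s powr (1 - 2*H) * t powr (-1)"
    using assms powr_add[of s 1 "-2*H"] powr_add[of t "-2*H" "2*H - 1"] by simp
  finally show ?thesis .
qed

lemma powr_exchange_le:
  fixes s t p q e :: real
  assumes "0 < s" "s \<le> t" "0 \<le> e"
  shows "s powr (p + e) * t powr (q - e) \<le> s powr p * t powr q"
proof -
  have "s powr (p + e) * t powr (q - e) = s powr p * t powr (q - e) * s powr e"
    by (simp add: powr_add)
  also have "\<dots> \<le> s powr p * t powr (q - e) * t powr e"
    using assms by (intro mult_left_mono powr_mono2) auto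
  also have "\<dots> = s powr p * t powr q"
    by (simp add: powr_add[symmetric])
  finally show ?thesis .
qed

(*
  The normalised covariance is dominated by 2 x^c y^d with c = -(1+H)/2, d = (1-3H)/2, whichever
  of x, y is larger: both exponents of 2 min^(1-2H) max^(-1) can be shifted to reach (c, d).
*)

lemma fbm_cov_weight_le:
  assumes "0 < x" "0 < y" "1/2 \<le> H" "H \<le> 1"
  shows "(x*y) powr (-2*H) * fbm_cov H x y \<le> 2 * (x powr (-(1+H)/2) * y powr ((1-3*H)/2))"
proof (cases "x \<le> y")
  case True
  have exps: "1 - 2*H = -(1+H)/2 + 3*(1-H)/2" "-1 = (1-3*H)/2 - 3*(1-H)/2"
    by (simp_all add: field_simps)
  have "(x*y) powr (-2*H) * fbm_cov H x y \<le> 2 * (x powr (1 - 2*H) * y powr (-1))"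
    using True assms fbm_cov_weight_le_ordered[of x y H] by simp
  also have "x powr (1 - 2*H) * y powr (-1) \<le> x powr (-(1+H)/2) * y powr ((1-3*H)/2)"
    unfolding exps using True assms by (intro powr_exchange_le) auto
  finally show ?thesis by simp
next
  case False
  have exps: "1 - 2*H = (1-3*H)/2 + (1-H)/2" "-1 = -(1+H)/2 - (1-H)/2"
    by (simp_all add: field_simps)
  have "(x*y) powr (-2*H) * fbm_cov H x y = (y*x) powr (-2*H) * fbm_cov H y x"
    by (simp add: fbm_cov_sym mult.commute)
  also have "\<dots> \<le> 2 * (y powr (1 - 2*H) * x powr (-1))"
    using False assms fbm_cov_weight_le_ordered[of y x H] by simp
  also have "y powr (1 - 2*H) * x powr (-1) \<le> y powr ((1-3*H)/2) * x powr (-(1+H)/2)"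
    unfolding exps using False assms by (intro powr_exchange_le) auto
  finally show ?thesis by (simp add: ac_simps)
qed

definition fbm_kernel :: "real \<Rightarrow> real \<times> real \<times> real \<times> real \<Rightarrow> real" where
  "fbm_kernel H = (\<lambda>(x, y, u, v). (x * y * u * v) powr (-2*H) * fbm_cov H x y * fbm_cov H u v
     * \<bar>x - u\<bar> powr (2*H - 2) * \<bar>y - v\<bar> powr (2*H - 2))"

lemma fbm_kernel_swap_pairs: "fbm_kernel H (y, x, v, u) = fbm_kernel H (x, y, u, v)"
  unfolding fbm_kernel_def by (simp add: fbm_cov_sym[of H y x] fbm_cov_sym[of H v u] ac_simps)

lemma fbm_kernel_swap_blocks: "fbm_kernel H (u, v, x, y) = fbm_kernel H (x, y, u, v)"
  unfolding fbm_kernel_def by (simp add: abs_minus_commute ac_simps)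

lemma fbm_kernel_le:
  assumes "1/2 \<le> H" "H \<le> 1" "0 < x" "0 < y" "0 < u" "0 < v"
  shows "fbm_kernel H (x, y, u, v) \<le> 4 * x powr (-(1+H)/2) * y powr ((1-3*H)/2)
     * (u powr (-(1+H)/2) * \<bar>x - u\<bar> powr (2*H - 2)) * (v powr ((1-3*H)/2) * \<bar>y - v\<bar> powr (2*H - 2))"
proof -
  define F where "F s t = (s*t) powr (-2*H) * fbm_cov H s t" for s t
  define D where "D = \<bar>x - u\<bar> powr (2*H - 2) * \<bar>y - v\<bar> powr (2*H - 2)"
  have "fbm_kernel H (x, y, u, v) = F x y * F u v * D"
    using assms by (simp add: fbm_kernel_def F_def D_def powr_mult ac_simps)
  also have "\<dots> \<le> (2 * (x powr (-(1+H)/2) * y powr ((1-3*H)/2)))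
      * (2 * (u powr (-(1+H)/2) * v powr ((1-3*H)/2))) * D"
    using assms unfolding F_def D_def
    by (intro mult_right_mono mult_mono fbm_cov_weight_le mult_nonneg_nonneg fbm_cov_nonneg) auto
  finally show ?thesis by (simp add: D_def ac_simps)
qed

abbreviation borel4 :: "(real \<times> real \<times> real \<times> real) measure" where
  "borel4 \<equiv> borel \<Otimes>\<^sub>M borel \<Otimes>\<^sub>M borel \<Otimes>\<^sub>M borel"

lemma borel4_eq_borel: "borel4 = borel"
  by (simp add: borel_prod)

lemma nn_integral_lborel_pair:
  fixes f :: "'a::euclidean_space \<times> 'b::euclidean_space \<Rightarrow> ennreal"
  assumes "f \<in> borel_measurable (borel \<Otimes>\<^sub>M borel)"
  shows "(\<integral>\<^sup>+p. f p \<partial>lborel) = (\<integral>\<^sup>+x. \<integral>\<^sup>+y. f (x, y) \<partial>lborel \<partial>lborel)"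
proof -
  have "f \<in> borel_measurable (lborel \<Otimes>\<^sub>M lborel)"
    using assms by (simp add: measurable_cong_sets[OF sets_pair_measure_cong[OF sets_lborel sets_lborel] refl])
  then show ?thesis
    by (simp add: lborel_prod[symmetric] lborel.nn_integral_fst)
qed

lemma nn_integral_lborel4:
  fixes k :: "real \<times> real \<times> real \<times> real \<Rightarrow> ennreal"
  assumes [measurable]: "k \<in> borel_measurable borel4"
  shows "(\<integral>\<^sup>+p. k p \<partial>lborel)
    = (\<integral>\<^sup>+x. \<integral>\<^sup>+y. \<integral>\<^sup>+u. \<integral>\<^sup>+v. k (x, y, u, v) \<partial>lborel \<partial>lborel \<partial>lborel \<partial>lborel)"
proof -
  have "(\<integral>\<^sup>+p. k p \<partial>lborel) = (\<integral>\<^sup>+x. \<integral>\<^sup>+w. k (x, w) \<partial>lborel \<partial>lborel)"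
    by (rule nn_integral_lborel_pair) (use assms in \<open>simp add: borel_prod\<close>)
  also have "\<dots> = (\<integral>\<^sup>+x. \<integral>\<^sup>+y. \<integral>\<^sup>+z. k (x, y, z) \<partial>lborel \<partial>lborel \<partial>lborel)"
    by (intro nn_integral_cong nn_integral_lborel_pair) (simp add: borel_prod[symmetric])
  also have "\<dots> = (\<integral>\<^sup>+x. \<integral>\<^sup>+y. \<integral>\<^sup>+u. \<integral>\<^sup>+v. k (x, y, u, v) \<partial>lborel \<partial>lborel \<partial>lborel \<partial>lborel)"
    by (intro nn_integral_cong nn_integral_lborel_pair) simp
  finally show ?thesis .
qed

lemma nn_integral_lborel4_swap_pairs:
  fixes k :: "real \<times> real \<times> real \<times> real \<Rightarrow> ennreal"
  assumes [measurable]: "k \<in> borel_measurable borel4"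
  shows "(\<integral>\<^sup>+p. (case p of (x, y, u, v) \<Rightarrow> k (y, x, v, u)) \<partial>lborel) = (\<integral>\<^sup>+p. k p \<partial>lborel)"
proof -
  have "(\<integral>\<^sup>+p. (case p of (x, y, u, v) \<Rightarrow> k (y, x, v, u)) \<partial>lborel)
     = (\<integral>\<^sup>+x. \<integral>\<^sup>+y. \<integral>\<^sup>+u. \<integral>\<^sup>+v. k (y, x, v, u) \<partial>lborel \<partial>lborel \<partial>lborel \<partial>lborel)"
    by (subst nn_integral_lborel4) (simp_all add: case_prod_beta)
  also have "\<dots> = (\<integral>\<^sup>+x. \<integral>\<^sup>+y. \<integral>\<^sup>+v. \<integral>\<^sup>+u. k (y, x, v, u) \<partial>lborel \<partial>lborel \<partial>lborel \<partial>lborel)"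
    by (intro nn_integral_cong lborel_pair.Fubini') measurable
  also have "\<dots> = (\<integral>\<^sup>+y. \<integral>\<^sup>+x. \<integral>\<^sup>+v. \<integral>\<^sup>+u. k (y, x, v, u) \<partial>lborel \<partial>lborel \<partial>lborel \<partial>lborel)"
    by (rule lborel_pair.Fubini') measurable
  also have "\<dots> = (\<integral>\<^sup>+p. k p \<partial>lborel)"
    by (simp add: nn_integral_lborel4)
  finally show ?thesis .
qed

(* The block swap is a product of four adjacent transpositions of the integration order. *)

lemma nn_integral_lborel4_swap_blocks:
  fixes k :: "real \<times> real \<times> real \<times> real \<Rightarrow> ennreal"
  assumes [measurable]: "k \<in> borel_measurable borel4"
  shows "(\<integral>\<^sup>+p. (case p of (x, y, u, v) \<Rightarrow> k (u, v, x, y)) \<partial>lborel) = (\<integral>\<^sup>+p. k p \<partial>lborel)"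
proof -
  have "(\<integral>\<^sup>+p. (case p of (x, y, u, v) \<Rightarrow> k (u, v, x, y)) \<partial>lborel)
     = (\<integral>\<^sup>+x. \<integral>\<^sup>+y. \<integral>\<^sup>+u. \<integral>\<^sup>+v. k (u, v, x, y) \<partial>lborel \<partial>lborel \<partial>lborel \<partial>lborel)"
    by (subst nn_integral_lborel4) (simp_all add: case_prod_beta)
  also have "\<dots> = (\<integral>\<^sup>+x. \<integral>\<^sup>+u. \<integral>\<^sup>+y. \<integral>\<^sup>+v. k (u, v, x, y) \<partial>lborel \<partial>lborel \<partial>lborel \<partial>lborel)"
    by (intro nn_integral_cong lborel_pair.Fubini') measurable
  also have "\<dots> = (\<integral>\<^sup>+u. \<integral>\<^sup>+x. \<integral>\<^sup>+y. \<integral>\<^sup>+v. k (u, v, x, y) \<partial>lborel \<partial>lborel \<partial>lborel \<partial>lborel)"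
    by (rule lborel_pair.Fubini') measurable
  also have "\<dots> = (\<integral>\<^sup>+u. \<integral>\<^sup>+x. \<integral>\<^sup>+v. \<integral>\<^sup>+y. k (u, v, x, y) \<partial>lborel \<partial>lborel \<partial>lborel \<partial>lborel)"
    by (intro nn_integral_cong lborel_pair.Fubini') measurable
  also have "\<dots> = (\<integral>\<^sup>+u. \<integral>\<^sup>+v. \<integral>\<^sup>+x. \<integral>\<^sup>+y. k (u, v, x, y) \<partial>lborel \<partial>lborel \<partial>lborel \<partial>lborel)"
    by (intro nn_integral_cong lborel_pair.Fubini') measurable
  also have "\<dots> = (\<integral>\<^sup>+p. k p \<partial>lborel)"
    by (simp add: nn_integral_lborel4)
  finally show ?thesis .
qed

definition first_max :: "(real \<times> real \<times> real \<times> real) set" where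
  "first_max = {(x, y, u, v). y \<le> x \<and> u \<le> x \<and> v \<le> x}"

lemma first_max_measurable [measurable]: "first_max \<in> sets borel4"
proof -
  have "first_max = {p \<in> space borel4. fst (snd p) \<le> fst p \<and> fst (snd (snd p)) \<le> fst p \<and> snd (snd (snd p)) \<le> fst p}"
    by (auto simp: first_max_def space_pair_measure)
  show ?thesis unfolding \<open>first_max = _\<close> by measurable
qed

(* The permutations generated by the two swaps bring each coordinate to the front. *)

lemma first_max_cover:
  "(x, y, u, v) \<in> first_max \<or> (y, x, v, u) \<in> first_max \<or> (u, v, x, y) \<in> first_max \<or> (v, u, y, x) \<in> first_max"
  by (auto simp: first_max_def)

lemma add_four_eq:
  fixes Y :: "'a::semiring_1"
  shows "Y + Y + Y + Y = 4 * Y"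
proof -
  have "4 * Y = 2 * Y + 2 * Y" using distrib_right[of 2 2 Y] by simp
  then show ?thesis by (simp add: mult_2 add.assoc)
qed

(*
  Symmetrisation: a function invariant under both swaps has integral at most four times its
  integral over first_max, since the four images of first_max cover R^4.
*)

lemma nn_integral_symmetrize:
  fixes g :: "real \<times> real \<times> real \<times> real \<Rightarrow> ennreal"
  assumes [measurable]: "g \<in> borel_measurable borel4"
    and swap_pairs: "\<And>x y u v. g (y, x, v, u) = g (x, y, u, v)"
    and swap_blocks: "\<And>x y u v. g (u, v, x, y) = g (x, y, u, v)"
  shows "(\<integral>\<^sup>+p. g p \<partial>lborel) \<le> 4 * (\<integral>\<^sup>+p\<in>first_max. g p \<partial>lborel)"
proof -
  define k where "k p = g p * indicator first_max p" for p
  define k\<^sub>2 where "k\<^sub>2 = (\<lambda>(x, y, u, v). k (y, x, v, u))"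
  define k\<^sub>3 where "k\<^sub>3 = (\<lambda>(x, y, u, v). k (u, v, x, y))"
  define k\<^sub>4 where "k\<^sub>4 = (\<lambda>(x, y, u, v). k (v, u, y, x))"
  have k: "k \<in> borel_measurable borel4" and k\<^sub>2: "k\<^sub>2 \<in> borel_measurable borel4"
    and "k\<^sub>3 \<in> borel_measurable borel4" "k\<^sub>4 \<in> borel_measurable borel4"
    unfolding k_def k\<^sub>2_def k\<^sub>3_def k\<^sub>4_def case_prod_beta by measurable
  then have meas: "k \<in> borel_measurable lborel" "k\<^sub>2 \<in> borel_measurable lborel"
      "k\<^sub>3 \<in> borel_measurable lborel" "k\<^sub>4 \<in> borel_measurable lborel"
    by (simp_all add: borel4_eq_borel)
  have cover: "g p \<le> k p + k\<^sub>2 p + k\<^sub>3 p + k\<^sub>4 p" for p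
  proof -
    obtain x y u v where p: "p = (x, y, u, v)" by (cases p) auto
    have "g p = k p \<or> g p = k\<^sub>2 p \<or> g p = k\<^sub>3 p \<or> g p = k\<^sub>4 p"
      using first_max_cover[of x y u v] swap_pairs[of x y u v] swap_blocks[of x y u v] swap_pairs[of u v x y]
      by (auto simp: p k_def k\<^sub>2_def k\<^sub>3_def k\<^sub>4_def)
    then show ?thesis
      by (elim disjE) (simp_all add: add.assoc add_increasing add_increasing2)
  qed
  have "(\<integral>\<^sup>+p. k\<^sub>2 p \<partial>lborel) = (\<integral>\<^sup>+p. k p \<partial>lborel)"
    unfolding k\<^sub>2_def using k by (rule nn_integral_lborel4_swap_pairs)
  moreover have "(\<integral>\<^sup>+p. k\<^sub>3 p \<partial>lborel) = (\<integral>\<^sup>+p. k p \<partial>lborel)"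
    unfolding k\<^sub>3_def using k by (rule nn_integral_lborel4_swap_blocks)
  moreover have "(\<integral>\<^sup>+p. k\<^sub>4 p \<partial>lborel) = (\<integral>\<^sup>+p. k\<^sub>2 p \<partial>lborel)"
    using nn_integral_lborel4_swap_blocks[OF k\<^sub>2] by (simp add: k\<^sub>2_def k\<^sub>4_def)
  moreover have "(\<integral>\<^sup>+p. g p \<partial>lborel) \<le> (\<integral>\<^sup>+p. k p + k\<^sub>2 p + k\<^sub>3 p + k\<^sub>4 p \<partial>lborel)"
    by (intro nn_integral_mono cover)
  moreover have "\<dots> = (\<integral>\<^sup>+p. k p \<partial>lborel) + (\<integral>\<^sup>+p. k\<^sub>2 p \<partial>lborel) + (\<integral>\<^sup>+p. k\<^sub>3 p \<partial>lborel)
      + (\<integral>\<^sup>+p. k\<^sub>4 p \<partial>lborel)"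
    using meas by (simp add: nn_integral_add borel_measurable_add)
  ultimately show ?thesis
    by (simp add: add_four_eq k_def)
qed

lemma nn_integral_lborel4_factor:
  fixes P :: "real \<Rightarrow> ennreal" and Q U V :: "real \<Rightarrow> real \<Rightarrow> ennreal"
  assumes [measurable]: "P \<in> borel_measurable borel"
    "(\<lambda>(x, y). Q x y) \<in> borel_measurable (borel \<Otimes>\<^sub>M borel)"
    "(\<lambda>(x, u). U x u) \<in> borel_measurable (borel \<Otimes>\<^sub>M borel)"
    "(\<lambda>(y, v). V y v) \<in> borel_measurable (borel \<Otimes>\<^sub>M borel)"
  shows "(\<integral>\<^sup>+p. (case p of (x, y, u, v) \<Rightarrow> P x * Q x y * U x u * V y v) \<partial>lborel)
    = (\<integral>\<^sup>+x. P x * (\<integral>\<^sup>+u. U x u \<partial>lborel) * (\<integral>\<^sup>+y. Q x y * (\<integral>\<^sup>+v. V y v \<partial>lborel) \<partial>lborel) \<partial>lborel)"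
proof -
  have "(\<integral>\<^sup>+p. (case p of (x, y, u, v) \<Rightarrow> P x * Q x y * U x u * V y v) \<partial>lborel)
    = (\<integral>\<^sup>+x. \<integral>\<^sup>+y. \<integral>\<^sup>+u. \<integral>\<^sup>+v. P x * Q x y * U x u * V y v \<partial>lborel \<partial>lborel \<partial>lborel \<partial>lborel)"
    by (subst nn_integral_lborel4) (simp_all add: case_prod_beta)
  also have "\<dots> = (\<integral>\<^sup>+x. \<integral>\<^sup>+y. \<integral>\<^sup>+u. (P x * Q x y * (\<integral>\<^sup>+v. V y v \<partial>lborel)) * U x u \<partial>lborel \<partial>lborel \<partial>lborel)"
    by (intro nn_integral_cong) (simp add: nn_integral_cmult ac_simps)
  also have "\<dots> = (\<integral>\<^sup>+x. \<integral>\<^sup>+y. (P x * (\<integral>\<^sup>+u. U x u \<partial>lborel)) * (Q x y * (\<integral>\<^sup>+v. V y v \<partial>lborel)) \<partial>lborel \<partial>lborel)"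
    by (intro nn_integral_cong, subst nn_integral_cmult) (measurable, simp add: ac_simps)
  also have "\<dots> = (\<integral>\<^sup>+x. P x * (\<integral>\<^sup>+u. U x u \<partial>lborel) * (\<integral>\<^sup>+y. Q x y * (\<integral>\<^sup>+v. V y v \<partial>lborel) \<partial>lborel) \<partial>lborel)"
    by (intro nn_integral_cong) (simp add: nn_integral_cmult)
  finally show ?thesis .
qed

(* The (y, v)-part of the majorant: integrating v first leaves a pure power of y. *)

lemma nn_integral_yv_bound:
  fixes a d x :: real
  assumes d: "-1 < d" "d \<le> 0" and a: "-1 < a" "a \<le> 0"
    and da: "d + a < -1" and dda: "0 < 2*d + a + 2" and x: "0 < x"
  shows "(\<integral>\<^sup>+y\<in>{0..x}. ennreal (y powr d) * (\<integral>\<^sup>+v\<in>{0..}. ennreal (v powr d * \<bar>y - v\<bar> powr a) \<partial>lborel) \<partial>lborel)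
    \<le> ennreal (beta_const d a) * ennreal (x powr (2*d + a + 2) / (2*d + a + 2))"
proof -
  define B where "B = beta_const d a"
  have B: "0 < B" unfolding B_def using d(1) a(1) da by (rule beta_const_pos)
  have slice: "ennreal (y powr d) * (\<integral>\<^sup>+v\<in>{0..}. ennreal (v powr d * \<bar>y - v\<bar> powr a) \<partial>lborel)
      \<le> ennreal B * ennreal (y powr (2*d + a + 1))" if "0 < y" for y
  proof -
    have "ennreal (y powr d) * (\<integral>\<^sup>+v\<in>{0..}. ennreal (v powr d * \<bar>y - v\<bar> powr a) \<partial>lborel)
        \<le> ennreal (y powr d) * ennreal (B * y powr (d + a + 1))"
      unfolding B_def using d a da that by (intro mult_left_mono nn_integral_beta_kernel) auto
    also have "\<dots> = ennreal B * ennreal (y powr (2*d + a + 1))"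
      using B that by (simp add: ennreal_mult[symmetric] powr_add[symmetric] ac_simps)
    finally show ?thesis .
  qed
  have "(\<integral>\<^sup>+y\<in>{0..x}. ennreal (y powr d) * (\<integral>\<^sup>+v\<in>{0..}. ennreal (v powr d * \<bar>y - v\<bar> powr a) \<partial>lborel) \<partial>lborel)
      \<le> (\<integral>\<^sup>+y\<in>{0..x}. ennreal B * ennreal (y powr (2*d + a + 1)) \<partial>lborel)"
  proof (intro nn_integral_mono)
    show "ennreal (y powr d) * (\<integral>\<^sup>+v\<in>{0..}. ennreal (v powr d * \<bar>y - v\<bar> powr a) \<partial>lborel) * indicator {0..x} y
        \<le> ennreal B * ennreal (y powr (2*d + a + 1)) * indicator {0..x} y" for y
      using slice[of y] by (cases "0 < y") (auto simp: indicator_def)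
  qed
  also have "\<dots> = ennreal B * ennreal (x powr (2*d + a + 2) / (2*d + a + 2))"
    using nn_integral_powr_0_to[of "2*d + a + 1" x] dda x
    by (simp add: nn_integral_cmult mult.assoc add.assoc)
  finally show ?thesis unfolding B_def .
qed

lemma nn_integral_inner_bound:
  fixes a c d x :: real
  assumes c: "-1 < c" "c \<le> 0" and d: "-1 < d" "d \<le> 0" and a: "-1 < a" "a \<le> 0"
    and ca: "c + a < -1" and da: "d + a < -1" and dda: "0 < 2*d + a + 2" and x: "0 < x"
  shows "(\<integral>\<^sup>+u\<in>{0..}. ennreal (u powr c * \<bar>x - u\<bar> powr a) \<partial>lborel)
      * (\<integral>\<^sup>+y\<in>{0..x}. ennreal (y powr d) * (\<integral>\<^sup>+v\<in>{0..}. ennreal (v powr d * \<bar>y - v\<bar> powr a) \<partial>lborel) \<partial>lborel)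
    \<le> ennreal (beta_const c a * beta_const d a / (2*d + a + 2) * x powr (c + 2*d + 2*a + 3))"
proof -
  define U where "U = beta_const c a * x powr (c + a + 1)"
  define B where "B = beta_const d a"
  define Y where "Y = x powr (2*d + a + 2) / (2*d + a + 2)"
  have UBY: "0 \<le> U" "0 \<le> B" "0 \<le> Y"
    unfolding U_def B_def Y_def using beta_const_pos[OF c(1) a(1) ca] beta_const_pos[OF d(1) a(1) da] dda
    by simp_all
  have "(\<integral>\<^sup>+u\<in>{0..}. ennreal (u powr c * \<bar>x - u\<bar> powr a) \<partial>lborel)
      * (\<integral>\<^sup>+y\<in>{0..x}. ennreal (y powr d) * (\<integral>\<^sup>+v\<in>{0..}. ennreal (v powr d * \<bar>y - v\<bar> powr a) \<partial>lborel) \<partial>lborel)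
    \<le> ennreal U * (ennreal B * ennreal Y)"
    unfolding U_def B_def Y_def using assms by (intro mult_mono nn_integral_yv_bound nn_integral_beta_kernel) auto
  also have "\<dots> = ennreal (U * (B * Y))"
    using UBY by (simp add: ennreal_mult)
  also have "U * (B * Y) = beta_const c a * B / (2*d + a + 2) * x powr (c + 2*d + 2*a + 3)"
  proof -
    have "x powr (c + a + 1) * x powr (2*d + a + 2) = x powr (c + 2*d + 2*a + 3)"
      by (simp add: powr_add[symmetric] algebra_simps)
    then show ?thesis
      unfolding U_def Y_def by (simp add: field_simps)
  qed
  finally show ?thesis unfolding B_def .
qed

definition cube :: "real \<Rightarrow> (real \<times> real \<times> real \<times> real) set" where
  "cube T = {1/T..1} \<times> {1/T..1} \<times> {1/T..1} \<times> {1/T..1}"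

lemma cube_measurable [measurable]: "cube T \<in> sets borel4"
  unfolding cube_def by (intro pair_measureI) auto

lemma fbm_kernel_measurable [measurable]: "(\<lambda>p. ennreal (fbm_kernel H p)) \<in> borel_measurable borel4"
  unfolding fbm_kernel_def fbm_cov_def case_prod_beta by measurable

definition fbm_const :: "real \<Rightarrow> real" where
  "fbm_const H = 4 * beta_const (-(1+H)/2) (2*H - 2) * beta_const ((1-3*H)/2) (2*H - 2) / (1 - H)"

lemma fbm_exponents:
  fixes H :: real
  assumes "1/2 < H" "H < 1"
  defines "a \<equiv> 2*H - 2" and "c \<equiv> -(1+H)/2" and "d \<equiv> (1-3*H)/2"
  shows "-1 < a" "a \<le> 0" "-1 < c" "c \<le> 0" "-1 < d" "d \<le> 0" "c + a < -1" "d + a < -1"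
    and "0 < 2*d + a + 2" "2*d + a + 2 = 1 - H" "c + (c + 2*d + 2*a + 3) = -1"
  using assms by (simp_all add: field_simps)

lemma fbm_const_pos:
  assumes "1/2 < H" "H < 1"
  shows "0 < fbm_const H"
proof -
  have "0 < beta_const (-(1+H)/2) (2*H - 2)"
    using assms by (intro beta_const_pos) (simp_all add: field_simps)
  moreover have "0 < beta_const ((1-3*H)/2) (2*H - 2)"
    using assms by (intro beta_const_pos) (simp_all add: field_simps)
  ultimately show ?thesis
    using assms by (simp add: fbm_const_def)
qed

lemma fbm_kernel_dominated:
  fixes H T x y u v :: real
  assumes H: "1/2 < H" "H < 1" and T: "0 < T"
  defines "a \<equiv> 2*H - 2" and "c \<equiv> -(1+H)/2" and "d \<equiv> (1-3*H)/2"
  shows "ennreal (fbm_kernel H (x, y, u, v)) * indicator (cube T) (x, y, u, v) * indicator first_max (x, y, u, v)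
    \<le> ennreal (4 * x powr c) * indicator {1/T..1} x * (ennreal (y powr d) * indicator {0..x} y)
      * (ennreal (u powr c * \<bar>x - u\<bar> powr a) * indicator {0..} u)
      * (ennreal (v powr d * \<bar>y - v\<bar> powr a) * indicator {0..} v)"
proof (cases "(x, y, u, v) \<in> cube T \<inter> first_max")
  case True
  have r: "1/T \<le> x" "x \<le> 1" "0 \<le> y" "y \<le> x" "0 \<le> u" "0 \<le> v"
    using True T by (auto simp: cube_def first_max_def intro: order.trans[of 0 "1/T"])
  have pos: "0 < x" "0 < y" "0 < u" "0 < v"
    using True T by (auto simp: cube_def intro: less_le_trans[of 0 "1/T"])
  have "ennreal (fbm_kernel H (x, y, u, v))
      \<le> ennreal (4 * x powr c * y powr d * (u powr c * \<bar>x - u\<bar> powr a) * (v powr d * \<bar>y - v\<bar> powr a))"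
    unfolding a_def c_def d_def using H pos by (intro ennreal_leI fbm_kernel_le) auto
  then show ?thesis
    using True r by (simp add: ennreal_mult[symmetric] mult.assoc)
qed auto

lemma fbm_slice_bound:
  fixes H x :: real
  assumes H: "1/2 < H" "H < 1" and x: "0 < x"
  defines "a \<equiv> 2*H - 2" and "c \<equiv> -(1+H)/2" and "d \<equiv> (1-3*H)/2"
  shows "ennreal (4 * x powr c) * ((\<integral>\<^sup>+u\<in>{0..}. ennreal (u powr c * \<bar>x - u\<bar> powr a) \<partial>lborel)
      * (\<integral>\<^sup>+y\<in>{0..x}. ennreal (y powr d) * (\<integral>\<^sup>+v\<in>{0..}. ennreal (v powr d * \<bar>y - v\<bar> powr a) \<partial>lborel) \<partial>lborel))
    \<le> ennreal (fbm_const H / x)"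
proof -
  note exps = fbm_exponents[OF H, folded a_def c_def d_def]
  define B where "B = beta_const c a * beta_const d a / (2*d + a + 2)"
  have "ennreal (4 * x powr c) * ((\<integral>\<^sup>+u\<in>{0..}. ennreal (u powr c * \<bar>x - u\<bar> powr a) \<partial>lborel)
      * (\<integral>\<^sup>+y\<in>{0..x}. ennreal (y powr d) * (\<integral>\<^sup>+v\<in>{0..}. ennreal (v powr d * \<bar>y - v\<bar> powr a) \<partial>lborel) \<partial>lborel))
    \<le> ennreal (4 * x powr c) * ennreal (B * x powr (c + 2*d + 2*a + 3))"
    unfolding B_def using exps x by (intro mult_left_mono nn_integral_inner_bound) auto
  also have "\<dots> = ennreal (4 * B * (x powr c * x powr (c + 2*d + 2*a + 3)))"
    using exps beta_const_pos[of c a] beta_const_pos[of d a]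
    by (simp add: B_def ennreal_mult[symmetric] ac_simps)
  also have "4 * B * (x powr c * x powr (c + 2*d + 2*a + 3)) = fbm_const H * x powr (-1)"
    unfolding B_def powr_add[symmetric] \<open>c + (c + 2*d + 2*a + 3) = -1\<close> \<open>2*d + a + 2 = 1 - H\<close>
    by (simp add: fbm_const_def a_def c_def d_def)
  finally show ?thesis
    using x by (simp add: powr_minus_divide)
qed

lemma fbm_kernel_first_max_bound:
  assumes H: "1/2 < H" "H < 1" and T: "1 < T"
  shows "(\<integral>\<^sup>+p\<in>first_max. ennreal (fbm_kernel H p) * indicator (cube T) p \<partial>lborel)
    \<le> ennreal (fbm_const H * ln T)"
proof -
  define a where "a = 2*H - 2"
  define c where "c = -(1+H)/2"
  define d where "d = (1-3*H)/2"
  define P where "P x = ennreal (4 * x powr c) * indicator {1/T..1} x" for x :: real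
  define Q where "Q x y = ennreal (y powr d) * indicator {0..x} y" for x y :: real
  define U where "U x u = ennreal (u powr c * \<bar>x - u\<bar> powr a) * indicator {0..} u" for x u :: real
  define V where "V y v = ennreal (v powr d * \<bar>y - v\<bar> powr a) * indicator {0..} v" for y v :: real
  have [measurable]: "P \<in> borel_measurable borel" "(\<lambda>(x, y). Q x y) \<in> borel_measurable (borel \<Otimes>\<^sub>M borel)"
    "(\<lambda>(x, u). U x u) \<in> borel_measurable (borel \<Otimes>\<^sub>M borel)"
    "(\<lambda>(y, v). V y v) \<in> borel_measurable (borel \<Otimes>\<^sub>M borel)"
    unfolding P_def Q_def U_def V_def case_prod_beta indicator_def atLeastAtMost_iff atLeast_iff
    by measurable
  have dominated: "ennreal (fbm_kernel H p) * indicator (cube T) p * indicator first_max p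
      \<le> (case p of (x, y, u, v) \<Rightarrow> P x * Q x y * U x u * V y v)" for p
    using fbm_kernel_dominated[OF H, of T, folded a_def c_def d_def] T
    by (cases p) (simp add: P_def Q_def U_def V_def)
  have slice: "P x * (\<integral>\<^sup>+u. U x u \<partial>lborel) * (\<integral>\<^sup>+y. Q x y * (\<integral>\<^sup>+v. V y v \<partial>lborel) \<partial>lborel)
      \<le> ennreal (fbm_const H / x) * indicator {1/T..1} x" for x
  proof (cases "x \<in> {1/T..1}")
    case True
    then have "0 < x" using T by (auto intro: less_le_trans[of 0 "1/T"])
    moreover have "(\<integral>\<^sup>+y. Q x y * (\<integral>\<^sup>+v. V y v \<partial>lborel) \<partial>lborel)
        = (\<integral>\<^sup>+y\<in>{0..x}. ennreal (y powr d) * (\<integral>\<^sup>+v\<in>{0..}. ennreal (v powr d * \<bar>y - v\<bar> powr a) \<partial>lborel) \<partial>lborel)"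
      by (auto simp: Q_def V_def intro!: nn_integral_cong split: split_indicator)
    ultimately show ?thesis
      using True fbm_slice_bound[OF H, of x, folded a_def c_def d_def]
      by (simp add: P_def U_def mult.assoc)
  qed (simp add: P_def)
  have "(\<integral>\<^sup>+p\<in>first_max. ennreal (fbm_kernel H p) * indicator (cube T) p \<partial>lborel)
      \<le> (\<integral>\<^sup>+p. (case p of (x, y, u, v) \<Rightarrow> P x * Q x y * U x u * V y v) \<partial>lborel)"
    by (intro nn_integral_mono dominated)
  also have "\<dots> = (\<integral>\<^sup>+x. P x * (\<integral>\<^sup>+u. U x u \<partial>lborel) * (\<integral>\<^sup>+y. Q x y * (\<integral>\<^sup>+v. V y v \<partial>lborel) \<partial>lborel) \<partial>lborel)"
    by (rule nn_integral_lborel4_factor) measurable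
  also have "\<dots> \<le> (\<integral>\<^sup>+x\<in>{1/T..1}. ennreal (fbm_const H / x) \<partial>lborel)"
    by (intro nn_integral_mono slice)
  also have "\<dots> = ennreal (fbm_const H * ln T)"
    using T fbm_const_pos[OF H] by (intro nn_integral_inverse_interval) auto
  finally show ?thesis .
qed

theorem lemma4p1:
  fixes H :: real
  assumes "1/2 < H" and "H < 1"
  shows "\<exists>K::real. 0 < K \<and> (\<forall>T::real. T > 1 \<longrightarrow>
    (\<integral>\<^sup>+ p \<in> {1/T..1} \<times> {1/T..1} \<times> {1/T..1} \<times> {1/T..1}.
       ennreal (case p of (x, y, u, v) \<Rightarrow>
         (x * y * u * v) powr (-2*H) * fbm_cov H x y * fbm_cov H u v
         * \<bar>x - u\<bar> powr (2*H - 2) * \<bar>y - v\<bar> powr (2*H - 2)) \<partial>lborel)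
    \<le> ennreal (K * ln T))"
proof -
  have "(\<integral>\<^sup>+p\<in>cube T. ennreal (fbm_kernel H p) \<partial>lborel) \<le> ennreal (4 * fbm_const H * ln T)"
    if T: "1 < T" for T
  proof -
    have "(\<integral>\<^sup>+p\<in>cube T. ennreal (fbm_kernel H p) \<partial>lborel)
        \<le> 4 * (\<integral>\<^sup>+p\<in>first_max. ennreal (fbm_kernel H p) * indicator (cube T) p \<partial>lborel)"
      by (rule nn_integral_symmetrize)
        (auto simp: fbm_kernel_swap_pairs fbm_kernel_swap_blocks cube_def indicator_def)
    also have "\<dots> \<le> 4 * ennreal (fbm_const H * ln T)"
      using assms T by (intro mult_left_mono fbm_kernel_first_max_bound) auto
    also have "\<dots> = ennreal (4 * fbm_const H * ln T)"
      by (simp add: ennreal_mult' mult.assoc)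
    finally show ?thesis .
  qed
  then show ?thesis
    using fbm_const_pos[OF assms] unfolding cube_def fbm_kernel_def
    by (intro exI[of _ "4 * fbm_const H"]) auto
qed

end
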